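(* Let $\gamma_{ab}$ and $h_{ab}$ be real symmetric invertible $2\times2$ matrices (the induced metric and the worldsheet metric at a point), with matrix forms $\Gamma$ and $H$, and let $a_1=\operatorname{tr}(\Gamma H^{-1})=\gamma_{ab}h^{ba}$, $a_2=\operatorname{tr}((\Gamma H^{-1})^2)=\gamma_{ab}h^{bc}\gamma_{cd}h^{da}$, where $h^{ab}$ is the inverse of $h_{ab}$. Let $\mathcal{L}=f(\sqrt{\gamma},a_1,a_2)$ with $f$ continuously differentiable, regarded as a function of $h^{ij}$ (with $\gamma_{ab}$ fixed). If $\partial\mathcal{L}/\partial h^{ij}=0$ for all $i,j$ and $\partial f/\partial a_1\neq0$ there, then $\partial f/\partial a_2\neq0$ and $$h_{ab}=\phi\,\gamma_{ab},\qquad \phi=-2\,\frac{\partial f/\partial a_2}{\partial f/\partial a_1}\Bigg|_{a_1=2\phi^{-1},\ a_2=2\phi^{-2}},$$ and in particular $a_1=2\phi^{-1}$, $a_2=2\phi^{-2}$.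
   Context: $\gamma$ denotes the absolute value of $\det\gamma_{ab}$; $\sqrt\gamma$ does not depend on $h$. The derivative $\partial\mathcal{L}/\partial h^{ij}$ is computed by the chain rule using $\partial a_1/\partial h^{ij}=\gamma_{ji}$ and $\partial a_2/\partial h^{ij}=2\gamma_{ja}h^{ab}\gamma_{bi}$. *)

theory Defs
  imports "HOL-Analysis.Analysis"
begin

text \<open>Matrices are 2x2 real matrices \<open>real^2^2\<close>. \<open>K\<close> stands for the inverse
  worldsheet metric (entries h^{ab}), \<open>\<Gamma>\<close> for the induced metric.\<close>

definition inv_a1 :: "real^2^2 \<Rightarrow> real^2^2 \<Rightarrow> real" where
  "inv_a1 \<Gamma> K = trace (\<Gamma> ** K)"

definition inv_a2 :: "real^2^2 \<Rightarrow> real^2^2 \<Rightarrow> real" where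
  "inv_a2 \<Gamma> K = trace ((\<Gamma> ** K) ** (\<Gamma> ** K))"

definition lagr :: "(real \<times> real \<times> real \<Rightarrow> real) \<Rightarrow> real^2^2 \<Rightarrow> real^2^2 \<Rightarrow> real" where
  "lagr f \<Gamma> K = f (sqrt \<bar>det \<Gamma>\<bar>, inv_a1 \<Gamma> K, inv_a2 \<Gamma> K)"

definition elem_mat :: "2 \<Rightarrow> 2 \<Rightarrow> real^2^2" where
  "elem_mat i j = (\<chi> a b. if a = i \<and> b = j then 1 else 0)"

end

theory Submission
  imports Defs
begin

text \<open>Varying the inverse metric \<open>K = H\<inverse>\<close> in the direction \<open>E\<close> changes \<open>a\<^sub>1\<close> to first order by
  \<open>tr(\<Gamma>E)\<close> and \<open>a\<^sub>2\<close> by \<open>2 tr(\<Gamma>K\<Gamma>E)\<close>. Stationarity in all elementary directions therefore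
  gives the matrix equation \<open>f\<^sub>1 \<Gamma> + 2 f\<^sub>2 \<Gamma>K\<Gamma> = 0\<close>, where \<open>f\<^sub>1, f\<^sub>2\<close> are the partial derivatives
  of \<open>f\<close> in \<open>a\<^sub>1, a\<^sub>2\<close>. As \<open>\<Gamma> \<noteq> 0\<close> and \<open>f\<^sub>1 \<noteq> 0\<close>, also \<open>f\<^sub>2 \<noteq> 0\<close>, and cancelling the invertible \<open>\<Gamma>\<close>
  yields \<open>\<Gamma>K = c I\<close> with \<open>c = -f\<^sub>1/(2f\<^sub>2)\<close>. Hence \<open>H = \<Gamma>/c\<close>, \<open>a\<^sub>1 = 2c\<close>, \<open>a\<^sub>2 = 2c\<^sup>2\<close>, and \<open>\<phi> = 1/c\<close>.\<close>

lemma trace_scaleR: "trace (t *\<^sub>R (A::real^'n^'n)) = t * trace A"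
  by (simp add: trace_def sum_distrib_left)

lemma trace_mult_elem_mat: "trace ((M::real^2^2) ** elem_mat i j) = M $ j $ i"
  using exhaust_2[of i] exhaust_2[of j]
  by (auto simp: trace_def matrix_matrix_mult_def elem_mat_def sum_2)

lemma matrix_add_rdistrib: "(B + C) ** (A::real^'n^'m) = B ** A + C ** A"
  by (vector matrix_matrix_mult_def sum.distrib[symmetric] field_simps)

lemma matrix_inv_right: "invertible (A::real^'n^'n) \<Longrightarrow> A ** matrix_inv A = mat 1"
  and matrix_inv_left: "invertible (A::real^'n^'n) \<Longrightarrow> matrix_inv A ** A = mat 1"
  unfolding invertible_def matrix_inv_def by (metis (mono_tags, lifting) someI_ex)+

lemma invertible_nonzero: "invertible (A::real^'n^'n) \<Longrightarrow> A \<noteq> 0"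
proof
  assume "invertible A" "A = 0"
  then have "(mat 1::real^'n^'n) = 0" by (simp add: invertible_def)
  then have "(mat 1::real^'n^'n) $ i $ i = 0" for i by simp
  then show False by (simp add: mat_def)
qed

lemma invertible_mult_right_cancel:
  fixes A B C :: "real^'n^'n"
  assumes "invertible A" and "B ** A = C ** A"
  shows "B = C"
  by (metis assms matrix_inv_right matrix_mul_assoc matrix_mul_rid)

lemma inv_a1_add_scaleR: "inv_a1 \<Gamma> (K + t *\<^sub>R E) = inv_a1 \<Gamma> K + t * trace (\<Gamma> ** E)"
  by (simp add: inv_a1_def matrix_add_ldistrib matrix_scalar_ac scalar_matrix_assoc[symmetric]
      trace_add trace_scaleR)

lemma inv_a2_add_scaleR:
  "inv_a2 \<Gamma> (K + t *\<^sub>R E) =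
     inv_a2 \<Gamma> K + t * (2 * trace (\<Gamma> ** K ** \<Gamma> ** E)) + t\<^sup>2 * trace ((\<Gamma> ** E) ** (\<Gamma> ** E))"
proof -
  define P Q where "P = \<Gamma> ** K" and "Q = \<Gamma> ** E"
  have "\<Gamma> ** (K + t *\<^sub>R E) = P + t *\<^sub>R Q"
    by (simp add: P_def Q_def matrix_add_ldistrib matrix_scalar_ac scalar_matrix_assoc[symmetric])
  moreover have "(P + t *\<^sub>R Q) ** (P + t *\<^sub>R Q)
      = P ** P + t *\<^sub>R (P ** Q) + t *\<^sub>R (Q ** P) + (t * t) *\<^sub>R (Q ** Q)"
    by (simp add: matrix_add_ldistrib matrix_add_rdistrib matrix_scalar_ac
        scalar_matrix_assoc[symmetric] scaleR_add_right add_ac)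
  moreover have "trace (Q ** P) = trace (P ** Q)"
    by (rule trace_mul_sym)
  moreover have "P ** Q = \<Gamma> ** K ** \<Gamma> ** E"
    by (simp add: P_def Q_def matrix_mul_assoc)
  ultimately show ?thesis
    by (simp add: inv_a2_def P_def Q_def trace_add trace_scaleR power2_eq_square)
qed

lemma has_real_derivative_lagr_direction:
  fixes \<Gamma> K E :: "real^2^2"
  defines "p \<equiv> (sqrt \<bar>det \<Gamma>\<bar>, inv_a1 \<Gamma> K, inv_a2 \<Gamma> K)"
  assumes "(f has_derivative f') (at p)"
  shows "((\<lambda>t. lagr f \<Gamma> (K + t *\<^sub>R E)) has_real_derivative
           f' (0, trace (\<Gamma> ** E), 2 * trace (\<Gamma> ** K ** \<Gamma> ** E))) (at 0)"
proof -
  define g where "g t = (sqrt \<bar>det \<Gamma>\<bar>, inv_a1 \<Gamma> (K + t *\<^sub>R E), inv_a2 \<Gamma> (K + t *\<^sub>R E))"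
    for t :: real
  have "(g has_vector_derivative (0, trace (\<Gamma> ** E), 2 * trace (\<Gamma> ** K ** \<Gamma> ** E))) (at 0)"
    unfolding g_def inv_a1_add_scaleR inv_a2_add_scaleR
    by (auto intro!: derivative_eq_intros simp: has_real_derivative_iff_has_vector_derivative[symmetric])
  moreover have "g 0 = p"
    by (simp add: g_def p_def)
  ultimately have "((f \<circ> g) has_vector_derivative f' (0, trace (\<Gamma> ** E), 2 * trace (\<Gamma> ** K ** \<Gamma> ** E))) (at 0)"
    using vector_derivative_diff_chain_within has_derivative_at_withinI[OF assms(2)] by metis
  then show ?thesis
    by (simp add: has_real_derivative_iff_has_vector_derivative lagr_def g_def o_def)
qed

lemma linear_Pair_zero_expand:
  fixes L :: "real \<times> real \<times> real \<Rightarrow> real"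
  assumes "linear L"
  shows "L (0, b, c) = b * L (0, 1, 0) + c * L (0, 0, 1)"
proof -
  have "L (0, b, c) = L (b *\<^sub>R (0, 1, 0) + c *\<^sub>R (0, 0, 1))"
    by simp
  also have "\<dots> = b * L (0, 1, 0) + c * L (0, 0, 1)"
    by (simp only: linear_add[OF assms] linear_scale[OF assms] real_scaleR_def)
  finally show ?thesis .
qed

lemma lagr_stationary_imp_matrix_eq:
  fixes \<Gamma> K :: "real^2^2"
  defines "p \<equiv> (sqrt \<bar>det \<Gamma>\<bar>, inv_a1 \<Gamma> K, inv_a2 \<Gamma> K)"
  assumes deriv: "(f has_derivative f') (at p)"
    and stat: "\<And>i j. ((\<lambda>t. lagr f \<Gamma> (K + t *\<^sub>R elem_mat i j)) has_real_derivative 0) (at 0)"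
  shows "f' (0, 1, 0) *\<^sub>R \<Gamma> + (2 * f' (0, 0, 1)) *\<^sub>R (\<Gamma> ** K ** \<Gamma>) = 0"
proof -
  have "linear f'"
    using deriv has_derivative_linear by blast
  have zero: "f' (0, \<Gamma> $ j $ i, 2 * (\<Gamma> ** K ** \<Gamma>) $ j $ i) = 0" for i j
    using DERIV_unique[OF has_real_derivative_lagr_direction[OF deriv[unfolded p_def]] stat]
    by (simp only: trace_mult_elem_mat)
  have "\<Gamma> $ j $ i * f' (0, 1, 0) + 2 * (\<Gamma> ** K ** \<Gamma>) $ j $ i * f' (0, 0, 1) = 0" for i j
    using linear_Pair_zero_expand[OF \<open>linear f'\<close>, of "\<Gamma> $ j $ i" "2 * (\<Gamma> ** K ** \<Gamma>) $ j $ i"] zero[of j i]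
    by linarith
  then show ?thesis
    by (simp add: vec_eq_iff algebra_simps)
qed

lemma sandwich_eq_imp_scalar_matrix:
  fixes \<Gamma> K :: "real^'n^'n"
  assumes "invertible \<Gamma>" and "a \<noteq> 0" and eq: "a *\<^sub>R \<Gamma> + b *\<^sub>R (\<Gamma> ** K ** \<Gamma>) = 0"
  shows "b \<noteq> 0" and "\<Gamma> ** K = (- a / b) *\<^sub>R mat 1"
proof -
  show "b \<noteq> 0"
  proof
    assume "b = 0"
    with eq \<open>a \<noteq> 0\<close> have "\<Gamma> = 0"
      by simp
    with invertible_nonzero[OF assms(1)] show False ..
  qed
  have scaled: "b *\<^sub>R (\<Gamma> ** K ** \<Gamma>) = (- a) *\<^sub>R \<Gamma>"
    using eq by (simp add: eq_neg_iff_add_eq_0 add.commute)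
  have "\<Gamma> ** K ** \<Gamma> = (1 / b) *\<^sub>R (b *\<^sub>R (\<Gamma> ** K ** \<Gamma>))"
    using \<open>b \<noteq> 0\<close> by simp
  also have "\<dots> = (- a / b) *\<^sub>R \<Gamma>"
    by (simp add: scaled)
  also have "\<dots> = ((- a / b) *\<^sub>R mat 1) ** \<Gamma>"
    by (simp only: scalar_matrix_assoc[symmetric] matrix_mul_lid)
  finally show "\<Gamma> ** K = (- a / b) *\<^sub>R mat 1"
    by (rule invertible_mult_right_cancel[OF assms(1)])
qed

lemma eq_scaleR_of_mult_matrix_inv:
  fixes \<Gamma> H :: "real^'n^'n"
  assumes "invertible H" and "\<Gamma> ** matrix_inv H = c *\<^sub>R mat 1"
  shows "\<Gamma> = c *\<^sub>R H"
proof -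
  have "\<Gamma> = \<Gamma> ** (matrix_inv H ** H)"
    using matrix_inv_left[OF assms(1)] by simp
  also have "\<dots> = c *\<^sub>R H"
    by (simp add: matrix_mul_assoc assms(2) scalar_matrix_assoc[symmetric])
  finally show ?thesis .
qed

lemma inv_a1_inv_a2_of_scalar_matrix:
  assumes "\<Gamma> ** K = c *\<^sub>R mat 1"
  shows "inv_a1 \<Gamma> K = 2 * c" and "inv_a2 \<Gamma> K = 2 * c\<^sup>2"
  using assms
  by (simp_all add: inv_a1_def inv_a2_def trace_scaleR trace_I matrix_scalar_ac
      scalar_matrix_assoc[symmetric] power2_eq_square)

theorem mainTheorem6:
  fixes \<Gamma> H :: "real^2^2"
    and f :: "real \<times> real \<times> real \<Rightarrow> real"
    and f' :: "real \<times> real \<times> real \<Rightarrow> real \<times> real \<times> real \<Rightarrow> real"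
  assumes symG: "transpose \<Gamma> = \<Gamma>" and invG: "invertible \<Gamma>"
    and symH: "transpose H = H" and invH: "invertible H"
    and fderiv: "\<And>p. (f has_derivative f' p) (at p)"
    and fC1: "\<And>v. continuous_on UNIV (\<lambda>p. f' p v)"
    and stat: "\<And>i j. ((\<lambda>t. lagr f \<Gamma> (matrix_inv H + t *\<^sub>R elem_mat i j))
                        has_real_derivative 0) (at 0)"
    and fa1: "f' (sqrt \<bar>det \<Gamma>\<bar>, inv_a1 \<Gamma> (matrix_inv H), inv_a2 \<Gamma> (matrix_inv H)) (0, 1, 0) \<noteq> 0"
  shows "f' (sqrt \<bar>det \<Gamma>\<bar>, inv_a1 \<Gamma> (matrix_inv H), inv_a2 \<Gamma> (matrix_inv H)) (0, 0, 1) \<noteq> 0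
     \<and> (\<exists>\<phi>. \<phi> \<noteq> 0
          \<and> \<phi> = - 2 * f' (sqrt \<bar>det \<Gamma>\<bar>, 2 / \<phi>, 2 / \<phi>^2) (0, 0, 1)
                    / f' (sqrt \<bar>det \<Gamma>\<bar>, 2 / \<phi>, 2 / \<phi>^2) (0, 1, 0)
          \<and> H = \<phi> *\<^sub>R \<Gamma>
          \<and> inv_a1 \<Gamma> (matrix_inv H) = 2 / \<phi>
          \<and> inv_a2 \<Gamma> (matrix_inv H) = 2 / \<phi>^2)"
proof -
  define K where "K = matrix_inv H"
  define p where "p = (sqrt \<bar>det \<Gamma>\<bar>, inv_a1 \<Gamma> K, inv_a2 \<Gamma> K)"
  define f1 f2 where "f1 = f' p (0, 1, 0)" and "f2 = f' p (0, 0, 1)"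
  have "f1 *\<^sub>R \<Gamma> + (2 * f2) *\<^sub>R (\<Gamma> ** K ** \<Gamma>) = 0"
    using lagr_stationary_imp_matrix_eq[OF fderiv stat[folded K_def]]
    by (simp only: f1_def f2_def p_def)
  moreover have "f1 \<noteq> 0"
    using fa1 by (simp add: f1_def p_def K_def)
  ultimately have "f2 \<noteq> 0" and "\<Gamma> ** K = (- f1 / (2 * f2)) *\<^sub>R mat 1"
    using sandwich_eq_imp_scalar_matrix[OF invG] by auto
  moreover define \<phi> where "\<phi> = - 2 * f2 / f1"
  ultimately have "\<phi> \<noteq> 0" and GK: "\<Gamma> ** K = (1 / \<phi>) *\<^sub>R mat 1"
    using \<open>f1 \<noteq> 0\<close> by simp_all
  have a1: "inv_a1 \<Gamma> K = 2 / \<phi>" and a2: "inv_a2 \<Gamma> K = 2 / \<phi>\<^sup>2"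
    using inv_a1_inv_a2_of_scalar_matrix[OF GK] by (simp_all add: power_divide)
  have "\<phi> = - 2 * f' p (0, 0, 1) / f' p (0, 1, 0)"
    by (simp add: \<phi>_def f1_def f2_def)
  then have "\<phi> = - 2 * f' (sqrt \<bar>det \<Gamma>\<bar>, 2 / \<phi>, 2 / \<phi>\<^sup>2) (0, 0, 1)
                   / f' (sqrt \<bar>det \<Gamma>\<bar>, 2 / \<phi>, 2 / \<phi>\<^sup>2) (0, 1, 0)"
    by (simp only: p_def a1 a2)
  moreover have "H = \<phi> *\<^sub>R \<Gamma>"
    using eq_scaleR_of_mult_matrix_inv[OF invH GK[unfolded K_def]] \<open>\<phi> \<noteq> 0\<close> by simp
  moreover have "f' (sqrt \<bar>det \<Gamma>\<bar>, inv_a1 \<Gamma> K, inv_a2 \<Gamma> K) (0, 0, 1) \<noteq> 0"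
    using \<open>f2 \<noteq> 0\<close> by (simp add: f2_def p_def)
  ultimately show ?thesis
    using \<open>\<phi> \<noteq> 0\<close> a1 a2 unfolding K_def[symmetric] by blast
qed

end
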